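(* Let $\mathfrak{b}_6$ be a butterfly algebra. Then there is a vector space decomposition $\mathfrak{b}_6=\mathfrak{v}\oplus[\mathfrak{b}_6,\mathfrak{b}_6]$ in which the subspaces $\mathfrak{v}$ and $[\mathfrak{b}_6,\mathfrak{b}_6]$ are totally isotropic and dual to each other with respect to $(\cdot,\cdot)$. In particular, $(\cdot,\cdot)$ is non-degenerate of signature $(3,3)$.
   Context: A butterfly algebra is a real 2-step nilpotent Lie algebra $\mathfrak{b}_6$ (i.e. $[\mathfrak{b}_6,[\mathfrak{b}_6,\mathfrak{b}_6]]=0$) of dimension $6$, endowed with a symmetric bilinear form $(\cdot,\cdot)$ that is invariant, i.e. $([X,Y],Z)=-(Y,[X,Z])$ for all $X,Y,Z$, such that there exists $Z\in[\mathfrak{b}_6,\mathfrak{b}_6]$ not lying in the radical $\mathfrak{r}=\{X\in\mathfrak{b}_6\mid (X,\mathfrak{b}_6)=0\}$. *)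

theory Defs
  imports "HOL-Analysis.Analysis"
begin

definition lie_algebra :: "('a::real_vector \<Rightarrow> 'a \<Rightarrow> 'a) \<Rightarrow> bool" where
  "lie_algebra br \<longleftrightarrow> bilinear br \<and> (\<forall>x. br x x = 0) \<and>
     (\<forall>x y z. br x (br y z) + br y (br z x) + br z (br x y) = 0)"

definition derived :: "('a::real_vector \<Rightarrow> 'a \<Rightarrow> 'a) \<Rightarrow> 'a set" where
  "derived br = span {br x y | x y. True}"

definition two_step_nilpotent :: "('a::real_vector \<Rightarrow> 'a \<Rightarrow> 'a) \<Rightarrow> bool" where
  "two_step_nilpotent br \<longleftrightarrow> (\<forall>x. \<forall>y\<in>derived br. br x y = 0)"

definition symmetric_form :: "('a \<Rightarrow> 'a \<Rightarrow> real) \<Rightarrow> bool" where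
  "symmetric_form B \<longleftrightarrow> (\<forall>x y. B x y = B y x)"

definition invariant_form :: "('a \<Rightarrow> 'a \<Rightarrow> real) \<Rightarrow> ('a \<Rightarrow> 'a \<Rightarrow> 'a) \<Rightarrow> bool" where
  "invariant_form B br \<longleftrightarrow> (\<forall>X Y Z. B (br X Y) Z = - B Y (br X Z))"

definition radical :: "('a \<Rightarrow> 'a \<Rightarrow> real) \<Rightarrow> 'a set" where
  "radical B = {X. \<forall>Y. B X Y = 0}"

text \<open>Butterfly algebra (dimension 6 is imposed separately via DIM).\<close>
definition butterfly :: "('a::real_vector \<Rightarrow> 'a \<Rightarrow> 'a) \<Rightarrow> ('a \<Rightarrow> 'a \<Rightarrow> real) \<Rightarrow> bool" where
  "butterfly br B \<longleftrightarrow> lie_algebra br \<and> two_step_nilpotent br \<and> bilinear B \<and>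
     symmetric_form B \<and> invariant_form B br \<and> (\<exists>Z\<in>derived br. Z \<notin> radical B)"

definition totally_isotropic :: "('a \<Rightarrow> 'a \<Rightarrow> real) \<Rightarrow> 'a set \<Rightarrow> bool" where
  "totally_isotropic B S \<longleftrightarrow> (\<forall>x\<in>S. \<forall>y\<in>S. B x y = 0)"

definition dual_pair :: "('a::real_vector \<Rightarrow> 'a \<Rightarrow> real) \<Rightarrow> 'a set \<Rightarrow> 'a set \<Rightarrow> bool" where
  "dual_pair B S T \<longleftrightarrow> (\<forall>x\<in>S. (\<forall>y\<in>T. B x y = 0) \<longrightarrow> x = 0) \<and>
                        (\<forall>y\<in>T. (\<forall>x\<in>S. B x y = 0) \<longrightarrow> y = 0)"

definition nondegenerate :: "('a::real_vector \<Rightarrow> 'a \<Rightarrow> real) \<Rightarrow> bool" where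
  "nondegenerate B \<longleftrightarrow> radical B = {0}"

definition pos_index :: "('a::euclidean_space \<Rightarrow> 'a \<Rightarrow> real) \<Rightarrow> nat" where
  "pos_index B = Max {dim S | S. subspace S \<and> (\<forall>x\<in>S. x \<noteq> 0 \<longrightarrow> B x x > 0)}"

definition neg_index :: "('a::euclidean_space \<Rightarrow> 'a \<Rightarrow> real) \<Rightarrow> nat" where
  "neg_index B = Max {dim S | S. subspace S \<and> (\<forall>x\<in>S. x \<noteq> 0 \<longrightarrow> B x x < 0)}"

definition signature :: "('a::euclidean_space \<Rightarrow> 'a \<Rightarrow> real) \<Rightarrow> nat \<times> nat" where
  "signature B = (pos_index B, neg_index B)"

end

theory Submission
  imports Defs
begin

text \<open>Invariance makes \<open>(x, y, z) \<mapsto> ([x, y], z)\<close> an alternating 3-form, and 2-step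
  nilpotency makes \<open>[b, b]\<close> totally isotropic. A bracket outside the radical yields \<open>a, b, c\<close>
  with \<open>([a, b], c) = 1\<close>; then \<open>f = ([b, c], [c, a], [a, b])\<close> is dual to \<open>e = (a, b, c)\<close>, and
  correcting \<open>e\<close> by half its Gram matrix along \<open>f\<close> gives an isotropic family \<open>u\<close> still dual
  to \<open>f\<close>. In dimension 6 the spans of \<open>u\<close> and \<open>f\<close> form a hyperbolic splitting: the spans of
  \<open>u\<^sub>i \<plusminus> f\<^sub>i\<close> are definite of dimension 3, so the signature is (3, 3), and no isotropic subspace
  has dimension above 3, which forces \<open>[b, b] = span f\<close>.\<close>

lemma totally_isotropic_span:
  assumes "bilinear B" "totally_isotropic B S"
  shows "totally_isotropic B (span S)"
  unfolding totally_isotropic_def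
proof (intro ballI)
  fix x y assume "x \<in> span S" "y \<in> span S"
  then show "B x y = 0"
    using bilinear_eq[OF assms(1), of "\<lambda>_ _. 0" "span S" S "span S" S] assms(2)
    by (simp add: bilinear_def linear_zero totally_isotropic_def)
qed

definition dual_families :: "('a \<Rightarrow> 'a \<Rightarrow> real) \<Rightarrow> 'i set \<Rightarrow> ('i \<Rightarrow> 'a) \<Rightarrow> ('i \<Rightarrow> 'a) \<Rightarrow> bool" where
  "dual_families B I v w \<longleftrightarrow> (\<forall>i\<in>I. \<forall>j\<in>I. B (v i) (w j) = (if i = j then 1 else 0))"

lemma bilinear_sum_left_delta:
  assumes "bilinear B" "finite I" "j \<in> I" "\<forall>i\<in>I. B (v i) y = (if i = j then s else 0)"
  shows "B (\<Sum>i\<in>I. c i *\<^sub>R v i) y = c j * s"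
proof -
  have lin: "linear (\<lambda>x. B x y)"
    using assms(1) by (simp add: bilinear_def)
  have "B (\<Sum>i\<in>I. c i *\<^sub>R v i) y = (\<Sum>i\<in>I. c i * B (v i) y)"
    by (simp add: linear_sum[OF lin, of "\<lambda>i. c i *\<^sub>R v i" I] bilinear_lmul[OF assms(1)])
  also have "\<dots> = (\<Sum>i\<in>I. if i = j then c j * s else 0)"
    using assms(4) by (intro sum.cong) auto
  also have "\<dots> = c j * s"
    using assms(2,3) by simp
  finally show ?thesis .
qed

lemma dual_families_sum_left:
  assumes "bilinear B" "finite I" "dual_families B I v w" "j \<in> I"
  shows "B (\<Sum>i\<in>I. c i *\<^sub>R v i) (w j) = c j"
  using bilinear_sum_left_delta[OF assms(1,2,4), of v "w j" 1 c] assms(3,4)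
  by (simp add: dual_families_def)

lemma dual_families_swap:
  assumes "symmetric_form B" "dual_families B I v w"
  shows "dual_families B I w v"
  using assms by (auto simp: dual_families_def symmetric_form_def)

lemma dual_families_inj_on:
  assumes "dual_families B I v w"
  shows "inj_on v I"
proof (rule inj_onI)
  fix i j assume "i \<in> I" "j \<in> I" "v i = v j"
  then have "B (v i) (w j) = 1"
    using assms by (simp add: dual_families_def)
  with \<open>i \<in> I\<close> \<open>j \<in> I\<close> assms show "i = j"
    by (auto simp: dual_families_def split: if_splits)
qed

lemma dual_families_span_sum:
  assumes "finite I" "dual_families B I v w" "x \<in> span (v ` I)"
  obtains c where "x = (\<Sum>i\<in>I. c i *\<^sub>R v i)"
proof -
  obtain d where "x = (\<Sum>y\<in>v ` I. d y *\<^sub>R y)"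
    using assms(1,3) by (auto simp: span_finite)
  also have "\<dots> = (\<Sum>i\<in>I. d (v i) *\<^sub>R v i)"
    using dual_families_inj_on[OF assms(2)] by (simp add: sum.reindex)
  finally show thesis by (rule that)
qed

lemma dual_families_span_eq_0:
  assumes "bilinear B" "finite I" "dual_families B I v w" "x \<in> span (v ` I)"
    and "\<forall>j\<in>I. B x (w j) = 0"
  shows "x = 0"
proof -
  obtain c where x: "x = (\<Sum>i\<in>I. c i *\<^sub>R v i)"
    using dual_families_span_sum[OF assms(2-4)] .
  have "c j = 0" if "j \<in> I" for j
    using dual_families_sum_left[OF assms(1-3) that, of c] assms(5) that x by simp
  then show ?thesis
    using x by simp
qed

lemma dual_families_independent:
  assumes "bilinear B" "finite I" "dual_families B I v w"
  shows "independent (v ` I)"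
proof (rule independent_if_scalars_zero)
  fix d y assume sum: "(\<Sum>y\<in>v ` I. d y *\<^sub>R y) = 0" and "y \<in> v ` I"
  then obtain j where j: "j \<in> I" "y = v j" by blast
  have "(\<Sum>i\<in>I. d (v i) *\<^sub>R v i) = 0"
    using sum dual_families_inj_on[OF assms(3)] by (simp add: sum.reindex)
  then show "d y = 0"
    using dual_families_sum_left[OF assms j(1), of "d \<circ> v"] j
    by (simp add: bilinear_lzero[OF assms(1)])
qed (use assms(2) in simp)

lemma dual_families_dim_span:
  assumes "bilinear B" "finite I" "dual_families B I v w"
  shows "dim (span (v ` I)) = card I"
  using dual_families_independent[OF assms] dual_families_inj_on[OF assms(3)]
  by (simp add: dim_eq_card_independent card_image)

lemma orthogonal_family_dual:
  assumes "bilinear B" "\<forall>i\<in>I. \<forall>j\<in>I. B (g i) (g j) = (if i = j then s else 0)" "s \<noteq> 0"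
  shows "dual_families B I g (\<lambda>j. inverse s *\<^sub>R g j)"
  using assms by (simp add: dual_families_def bilinear_rmul)

lemma orthogonal_family_sum_square:
  assumes "bilinear B" "finite I" "\<forall>i\<in>I. \<forall>j\<in>I. B (g i) (g j) = (if i = j then s else 0)"
  shows "B (\<Sum>i\<in>I. c i *\<^sub>R g i) (\<Sum>i\<in>I. c i *\<^sub>R g i) = s * (\<Sum>i\<in>I. (c i)\<^sup>2)"
proof -
  define x where "x = (\<Sum>i\<in>I. c i *\<^sub>R g i)"
  have lin: "linear (B x)"
    using assms(1) by (simp add: bilinear_def)
  have "B x x = B x (\<Sum>j\<in>I. c j *\<^sub>R g j)"
    by (simp add: x_def)
  also have "\<dots> = (\<Sum>j\<in>I. c j * B x (g j))"
    by (simp add: linear_sum[OF lin, of "\<lambda>j. c j *\<^sub>R g j" I] bilinear_rmul[OF assms(1)])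
  also have "\<dots> = (\<Sum>j\<in>I. c j * (c j * s))"
    unfolding x_def using bilinear_sum_left_delta[OF assms(1,2)] assms(3)
    by (intro sum.cong) auto
  finally show ?thesis
    by (simp add: x_def sum_distrib_left power2_eq_square mult_ac)
qed

lemma orthogonal_family_span_definite:
  fixes B :: "'a::real_vector \<Rightarrow> 'a \<Rightarrow> real"
  assumes "bilinear B" "finite I" "\<forall>i\<in>I. \<forall>j\<in>I. B (g i) (g j) = (if i = j then s else 0)"
    and "s \<noteq> 0" "x \<in> span (g ` I)" "x \<noteq> 0"
  obtains r where "r > 0" "B x x = s * r"
proof -
  obtain c where x: "x = (\<Sum>i\<in>I. c i *\<^sub>R g i)"
    using dual_families_span_sum[OF assms(2) orthogonal_family_dual[OF assms(1,3,4)] assms(5)] .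
  have "\<exists>i\<in>I. c i \<noteq> 0"
    using x assms(6) by (metis (no_types, lifting) scale_zero_left sum.neutral)
  then have "(\<Sum>i\<in>I. (c i)\<^sup>2) > 0"
    using assms(2) by (auto simp: sum_pos2)
  with that show thesis
    using orthogonal_family_sum_square[OF assms(1-3), of c] x by simp
qed

lemma set_plus_subspaces_eq_UNIV:
  fixes U F :: "'a::euclidean_space set"
  assumes "subspace U" "subspace F" "U \<inter> F = {0}" "dim U + dim F = DIM('a)"
  shows "U + F = UNIV"
proof -
  have sums: "U + F = {x + y |x y. x \<in> U \<and> y \<in> F}"
    by (auto simp: set_plus_def)
  have "dim (U + F) = DIM('a)"
    using dim_sums_Int[OF assms(1,2)] assms(3,4) by (simp add: sums)
  then have "span (U + F) = UNIV"
    by (simp add: dim_eq_full)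
  then show ?thesis
    using subspace_sums[OF assms(1,2)] span_eq_iff by (metis sums)
qed

lemma definite_isotropic_dim_le:
  fixes B :: "'a::euclidean_space \<Rightarrow> 'a \<Rightarrow> real"
  assumes "subspace S" "subspace T" "\<forall>x\<in>S. x \<noteq> 0 \<longrightarrow> B x x \<noteq> 0"
    and "totally_isotropic B T"
  shows "dim S + dim T \<le> DIM('a)"
proof -
  have "S \<inter> T \<subseteq> {0}"
    using assms(3,4) by (auto simp: totally_isotropic_def)
  then have "dim (S \<inter> T) = 0"
    using dim_subset by fastforce
  then show ?thesis
    using dim_sums_Int[OF assms(1,2)] dim_subset_UNIV[of "{x + y |x y. x \<in> S \<and> y \<in> T}"]
    by linarith
qed

lemma dual_pair_isotropic_inter:
  assumes "subspace U" "subspace F" "dual_pair B U F" "totally_isotropic B F"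
  shows "U \<inter> F = {0}"
  using assms by (auto simp: dual_pair_def totally_isotropic_def subspace_0)

lemma dual_pair_isotropic_nondegenerate:
  assumes "bilinear B" "symmetric_form B" "U + F = UNIV" "dual_pair B U F"
    and "totally_isotropic B U" "totally_isotropic B F"
  shows "nondegenerate B"
  unfolding nondegenerate_def radical_def
proof (intro equalityI subsetI)
  fix x assume "x \<in> {X. \<forall>Y. B X Y = 0}"
  then have x: "B x y = 0" "B y x = 0" for y
    using assms(2) by (auto simp: symmetric_form_def)
  obtain p q where pq: "p \<in> U" "q \<in> F" "x = p + q"
    using assms(3) by (metis UNIV_I set_plus_elim)
  have "B p y = 0" if "y \<in> F" for y
    using x(1)[of y] pq that assms(6)
    by (simp add: totally_isotropic_def bilinear_ladd[OF assms(1)])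
  then have "p = 0"
    using assms(4) pq by (simp add: dual_pair_def)
  moreover have "B y q = 0" if "y \<in> U" for y
    using x(2)[of y] pq that assms(5)
    by (simp add: totally_isotropic_def bilinear_radd[OF assms(1)])
  then have "q = 0"
    using assms(4) pq by (simp add: dual_pair_def)
  ultimately show "x \<in> {0}"
    using pq by simp
qed (simp add: bilinear_lzero[OF assms(1)])

lemma isotropic_dual_family_exists:
  assumes "bilinear B" "symmetric_form B" "finite I" "dual_families B I e f"
    and "totally_isotropic B (f ` I)"
  obtains u where "dual_families B I u f" "totally_isotropic B (u ` I)"
proof -
  \<comment> \<open>Shifting along the isotropic \<open>f\<close> keeps the pairing with \<open>f\<close>, and each of the two cross
      terms of \<open>(u\<^sub>i, u\<^sub>k)\<close> cancels half of \<open>(e\<^sub>i, e\<^sub>k)\<close>.\<close>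
  define s where "s i = (\<Sum>j\<in>I. B (e i) (e j) *\<^sub>R f j)" for i
  define u where "u i = e i - (1/2) *\<^sub>R s i" for i
  have symm: "B x y = B y x" for x y
    using assms(2) by (simp add: symmetric_form_def)
  have s_span: "s i \<in> span (f ` I)" for i
    unfolding s_def by (intro span_sum span_scale span_base) simp
  have s_f: "B (s i) (f k) = 0" if "k \<in> I" for i k
    using totally_isotropic_span[OF assms(1,5)] s_span that by (simp add: totally_isotropic_def span_base)
  have s_s: "B (s i) (s k) = 0" for i k
    using totally_isotropic_span[OF assms(1,5)] s_span by (simp add: totally_isotropic_def)
  have s_e: "B (s i) (e k) = B (e i) (e k)" if "k \<in> I" for i k
    unfolding s_def using dual_families_sum_left[OF assms(1,3) dual_families_swap[OF assms(2,4)] that] .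
  have "dual_families B I u f"
    using assms(4) s_f by (simp add: dual_families_def u_def bilinear_lsub[OF assms(1)] bilinear_lmul[OF assms(1)])
  moreover have "B (u i) (u k) = 0" if "i \<in> I" "k \<in> I" for i k
    using s_e[OF that(2), of i] s_e[OF that(1), of k] s_s[of i k] symm[of "e i" "s k"] symm[of "e k" "e i"]
    by (simp add: u_def bilinear_lsub[OF assms(1)] bilinear_rsub[OF assms(1)]
        bilinear_lmul[OF assms(1)] bilinear_rmul[OF assms(1)])
  then have "totally_isotropic B (u ` I)"
    by (auto simp: totally_isotropic_def)
  ultimately show thesis
    by (rule that)
qed

lemma Max_definite_dims_eqI:
  fixes B :: "'a::real_vector \<Rightarrow> 'a \<Rightarrow> real"
  assumes "subspace G" "dim G = n" "\<forall>x\<in>G. x \<noteq> 0 \<longrightarrow> P (B x x)"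
    and "\<And>S. subspace S \<Longrightarrow> \<forall>x\<in>S. x \<noteq> 0 \<longrightarrow> P (B x x) \<Longrightarrow> dim S \<le> n"
  shows "Max {dim S |S. subspace S \<and> (\<forall>x\<in>S. x \<noteq> 0 \<longrightarrow> P (B x x))} = n"
proof (rule Max_eqI)
  let ?M = "{dim S |S. subspace S \<and> (\<forall>x\<in>S. x \<noteq> 0 \<longrightarrow> P (B x x))}"
  have "?M \<subseteq> {..n}"
    using assms(4) by auto
  then show "finite ?M"
    by (rule finite_subset) simp
  show "m \<le> n" if "m \<in> ?M" for m
    using that assms(4) by auto
  show "n \<in> ?M"
    using assms(1-3) by auto
qed

locale hyperbolic_frame =
  fixes B :: "'a::euclidean_space \<Rightarrow> 'a \<Rightarrow> real" and I :: "'i set" and u f :: "'i \<Rightarrow> 'a"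
  assumes bilinear: "bilinear B" and symmetric: "symmetric_form B"
    and finite: "finite I" and DIM_eq: "DIM('a) = 2 * card I"
    and dual: "dual_families B I u f"
    and u_isotropic: "totally_isotropic B (u ` I)"
    and f_isotropic: "totally_isotropic B (f ` I)"
begin

lemma isotropic_span_u: "totally_isotropic B (span (u ` I))"
  using totally_isotropic_span[OF bilinear u_isotropic] .

lemma isotropic_span_f: "totally_isotropic B (span (f ` I))"
  using totally_isotropic_span[OF bilinear f_isotropic] .

lemma dim_span_u: "dim (span (u ` I)) = card I"
  using dual_families_dim_span[OF bilinear finite dual] .

lemma dim_span_f: "dim (span (f ` I)) = card I"
  using dual_families_dim_span[OF bilinear finite dual_families_swap[OF symmetric dual]] .

lemma dual_pair_spans: "dual_pair B (span (u ` I)) (span (f ` I))"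
  unfolding dual_pair_def
proof (intro conjI ballI impI)
  fix x assume "x \<in> span (u ` I)" "\<forall>y\<in>span (f ` I). B x y = 0"
  then show "x = 0"
    using dual_families_span_eq_0[OF bilinear finite dual] by (simp add: span_base)
next
  fix y assume y: "y \<in> span (f ` I)" "\<forall>x\<in>span (u ` I). B x y = 0"
  then have "\<forall>j\<in>I. B y (u j) = 0"
    using symmetric by (metis image_eqI span_base symmetric_form_def)
  with y(1) show "y = 0"
    using dual_families_span_eq_0[OF bilinear finite dual_families_swap[OF symmetric dual]] by blast
qed

lemma spans_inter: "span (u ` I) \<inter> span (f ` I) = {0}"
  using dual_pair_isotropic_inter[OF _ _ dual_pair_spans isotropic_span_f] by simp

lemma spans_sum: "span (u ` I) + span (f ` I) = UNIV"
  using set_plus_subspaces_eq_UNIV[OF _ _ spans_inter] dim_span_u dim_span_f DIM_eq by simp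

lemma nondegenerate: "nondegenerate B"
  using dual_pair_isotropic_nondegenerate[OF bilinear symmetric spans_sum dual_pair_spans
      isotropic_span_u isotropic_span_f] .

text \<open>For \<open>t = \<plusminus>1\<close> these families span the definite subspaces witnessing the signature.\<close>

lemma twisted_family_orthogonal:
  "\<forall>i\<in>I. \<forall>j\<in>I. B (u i + t *\<^sub>R f i) (u j + t *\<^sub>R f j) = (if i = j then 2 * t else 0)"
proof (intro ballI)
  fix i j assume "i \<in> I" "j \<in> I"
  then have "B (u i) (u j) = 0" "B (f i) (f j) = 0"
    "B (u i) (f j) = (if i = j then 1 else 0)" "B (f i) (u j) = (if i = j then 1 else 0)"
    using u_isotropic f_isotropic dual dual_families_swap[OF symmetric dual]
    by (auto simp: totally_isotropic_def dual_families_def)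
  then show "B (u i + t *\<^sub>R f i) (u j + t *\<^sub>R f j) = (if i = j then 2 * t else 0)"
    by (simp add: bilinear_ladd[OF bilinear] bilinear_radd[OF bilinear]
        bilinear_lmul[OF bilinear] bilinear_rmul[OF bilinear])
qed

lemma twisted_span_definite:
  assumes "t \<noteq> 0" "x \<in> span ((\<lambda>i. u i + t *\<^sub>R f i) ` I)" "x \<noteq> 0"
  shows "t * B x x > 0"
proof -
  obtain r where r: "r > 0" "B x x = 2 * t * r"
    by (rule orthogonal_family_span_definite[OF bilinear finite twisted_family_orthogonal
          _ assms(2,3)]) (use assms(1) in simp_all)
  have "t * t > 0"
    using assms(1) not_real_square_gt_zero by blast
  then show ?thesis
    using r by (simp add: algebra_simps)
qed

lemma dim_twisted_span: "t \<noteq> 0 \<Longrightarrow> dim (span ((\<lambda>i. u i + t *\<^sub>R f i) ` I)) = card I"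
  using dual_families_dim_span[OF bilinear finite orthogonal_family_dual[OF bilinear twisted_family_orthogonal]]
  by simp

lemma definite_subspace_dim_le:
  assumes "subspace S" "\<forall>x\<in>S. x \<noteq> 0 \<longrightarrow> B x x \<noteq> 0"
  shows "dim S \<le> card I"
  using definite_isotropic_dim_le[of S "span (u ` I)" B] assms isotropic_span_u dim_span_u DIM_eq
  by simp

lemma pos_index: "pos_index B = card I"
  unfolding pos_index_def
proof (rule Max_definite_dims_eqI[where P="\<lambda>r. r > 0", OF subspace_span dim_twisted_span[of 1]])
  show "\<forall>x\<in>span ((\<lambda>i. u i + 1 *\<^sub>R f i) ` I). x \<noteq> 0 \<longrightarrow> B x x > 0"
    using twisted_span_definite[of 1] by simp
  show "dim S \<le> card I" if "subspace S" "\<forall>x\<in>S. x \<noteq> 0 \<longrightarrow> B x x > 0" for S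
    using that(2) by (intro definite_subspace_dim_le[OF that(1)]) auto
qed simp

lemma neg_index: "neg_index B = card I"
  unfolding neg_index_def
proof (rule Max_definite_dims_eqI[where P="\<lambda>r. r < 0", OF subspace_span dim_twisted_span[of "-1"]])
  show "\<forall>x\<in>span ((\<lambda>i. u i + (-1) *\<^sub>R f i) ` I). x \<noteq> 0 \<longrightarrow> B x x < 0"
    using twisted_span_definite[of "-1"] by simp
  show "dim S \<le> card I" if "subspace S" "\<forall>x\<in>S. x \<noteq> 0 \<longrightarrow> B x x < 0" for S
    using that(2) by (intro definite_subspace_dim_le[OF that(1)]) auto
qed simp

lemma isotropic_superspace_eq:
  assumes "subspace D" "totally_isotropic B D" "span (f ` I) \<subseteq> D"
  shows "D = span (f ` I)"
proof -
  let ?G = "span ((\<lambda>i. u i + 1 *\<^sub>R f i) ` I)"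
  have "B x x \<noteq> 0" if "x \<in> ?G" "x \<noteq> 0" for x
    using twisted_span_definite[of 1 x] that by simp
  then have "dim ?G + dim D \<le> DIM('a)"
    using definite_isotropic_dim_le[of ?G D B] assms(1,2) by blast
  then have "dim D \<le> card I"
    using dim_twisted_span[of 1] DIM_eq by simp
  then show ?thesis
    using subspace_dim_equal[OF subspace_span assms(1,3)] dim_span_f by simp
qed

end

lemma lie_algebra_antisym:
  assumes "lie_algebra br"
  shows "br x y = - br y x"
proof -
  have bil: "bilinear br" and alt: "\<And>z. br z z = 0"
    using assms by (auto simp: lie_algebra_def)
  have "br (x + y) (x + y) = br x x + br x y + (br y x + br y y)"
    by (simp add: bilinear_ladd[OF bil] bilinear_radd[OF bil] algebra_simps)
  then have "br x y + br y x = 0"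
    by (simp add: alt)
  then show ?thesis
    by (simp add: eq_neg_iff_add_eq_0)
qed

lemma bracket_in_derived: "br x y \<in> derived br"
  unfolding derived_def by (rule span_base) blast

lemma invariant_form_bracket_self:
  assumes "lie_algebra br" "bilinear B" "invariant_form B br"
  shows "B (br x y) x = 0"
  using assms by (simp add: invariant_form_def lie_algebra_def bilinear_rzero)

lemma invariant_form_bracket_cyclic:
  assumes "lie_algebra br" "bilinear B" "symmetric_form B" "invariant_form B br"
  shows "B (br x y) z = B (br y z) x"
proof -
  have "B (br y z) x = - B z (br y x)"
    using assms(4) by (simp add: invariant_form_def)
  also have "\<dots> = B (br x y) z"
    using assms(3) lie_algebra_antisym[OF assms(1), of y x]
    by (simp add: symmetric_form_def bilinear_rneg[OF assms(2)])
  finally show ?thesis ..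
qed

lemma derived_totally_isotropic:
  assumes "bilinear B" "invariant_form B br" "two_step_nilpotent br"
  shows "totally_isotropic B (derived br)"
  unfolding derived_def
proof (rule totally_isotropic_span[OF assms(1)])
  have "B (br x y) (br z w) = 0" for x y z w
    using assms(2,3) bracket_in_derived[of br z w]
    by (simp add: invariant_form_def two_step_nilpotent_def bilinear_rzero[OF assms(1)])
  then show "totally_isotropic B {br x y |x y. True}"
    by (auto simp: totally_isotropic_def)
qed

lemma butterfly_bracket_triple:
  assumes "butterfly br B"
  obtains a b c where "B (br a b) c = 1"
proof -
  have bil: "bilinear B"
    using assms by (simp add: butterfly_def)
  obtain Z where Z: "Z \<in> derived br" "Z \<notin> radical B"
    using assms by (auto simp: butterfly_def)
  then obtain Y where "B Z Y \<noteq> 0"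
    by (auto simp: radical_def)
  have "\<exists>a b. B (br a b) Y \<noteq> 0"
  proof (rule ccontr)
    assume "\<not> ?thesis"
    then have gen: "B x Y = 0" if "x \<in> {br x y |x y. True}" for x
      using that by blast
    have "linear (\<lambda>x. B x Y)"
      using bil by (simp add: bilinear_def)
    then have "B Z Y = 0"
      using linear_eq_0_on_span gen Z(1) unfolding derived_def by blast
    with \<open>B Z Y \<noteq> 0\<close> show False ..
  qed
  then obtain a b where "B (br a b) Y \<noteq> 0"
    by blast
  then have "B (br a b) (inverse (B (br a b) Y) *\<^sub>R Y) = 1"
    by (simp add: bilinear_rmul[OF bil])
  then show thesis
    by (rule that)
qed

lemma bracket_triple_dual_families:
  assumes "lie_algebra br" "bilinear B" "symmetric_form B" "invariant_form B br"
    and "B (br a b) c = 1"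
  shows "dual_families B {0, 1, 2::nat} ((!) [a, b, c]) ((!) [br b c, br c a, br a b])"
proof -
  note cyclic = invariant_form_bracket_cyclic[OF assms(1-4)]
  have "br y y = 0" for y
    using assms(1) by (simp add: lie_algebra_def)
  then have self: "B (br x y) x = 0" "B (br x y) y = 0" for x y
    using invariant_form_bracket_self[OF assms(1,2,4)] cyclic[of x y y]
    by (simp_all add: bilinear_lzero[OF assms(2)])
  have symm: "B x y = B y x" for x y
    using assms(3) by (simp add: symmetric_form_def)
  have "B a (br b c) = 1" "B b (br c a) = 1" "B c (br a b) = 1"
    using assms(5) cyclic[of a b c] cyclic[of b c a] symm by metis+
  moreover have "B a (br c a) = 0" "B a (br a b) = 0" "B b (br b c) = 0"
    "B b (br a b) = 0" "B c (br b c) = 0" "B c (br c a) = 0"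
    using self symm by metis+
  ultimately show ?thesis
    by (simp add: dual_families_def)
qed

theorem proposition5p3:
  fixes br :: "'a::euclidean_space \<Rightarrow> 'a \<Rightarrow> 'a"
    and B :: "'a \<Rightarrow> 'a \<Rightarrow> real"
  assumes "DIM('a) = 6"
    and "butterfly br B"
  shows "(\<exists>v. subspace v \<and> v \<inter> derived br = {0} \<and> v + derived br = UNIV \<and>
              totally_isotropic B v \<and> totally_isotropic B (derived br) \<and>
              dual_pair B v (derived br))
         \<and> nondegenerate B \<and> signature B = (3, 3)"
proof -
  have lie: "lie_algebra br" and bil: "bilinear B" and sym: "symmetric_form B"
    and inv: "invariant_form B br" and D_iso: "totally_isotropic B (derived br)"
    using assms(2) derived_totally_isotropic by (auto simp: butterfly_def)
  obtain a b c where abc: "B (br a b) c = 1"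
    using butterfly_bracket_triple[OF assms(2)] .
  define I where "I = {0, 1, 2::nat}"
  define f where "f = (!) [br b c, br c a, br a b]"
  have f_derived: "f ` I \<subseteq> derived br"
    by (auto simp: I_def f_def bracket_in_derived)
  have dual: "dual_families B I ((!) [a, b, c]) f"
    unfolding I_def f_def by (rule bracket_triple_dual_families[OF lie bil sym inv abc])
  obtain u where "dual_families B I u f" "totally_isotropic B (u ` I)"
    using isotropic_dual_family_exists[OF bil sym _ dual] D_iso f_derived
    by (auto simp: I_def totally_isotropic_def)
  then interpret hyperbolic_frame B I u f
    using bil sym assms(1) D_iso f_derived by unfold_locales (auto simp: I_def totally_isotropic_def)
  have "derived br = span (f ` I)"
    using isotropic_superspace_eq[OF _ D_iso] f_derived by (simp add: derived_def span_minimal)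
  then show ?thesis
    using spans_inter spans_sum isotropic_span_u isotropic_span_f dual_pair_spans nondegenerate
      pos_index neg_index by (auto simp: signature_def I_def)
qed

end
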